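(* Let $q$ be an odd prime power and let $f$ be a planar function on $\mathbb F_{q^2}$. Let $\{g_a : a\in\mathbb F_{q^2}\}$ be a family of injections $g_a:\mathbb F_q\to\mathbb F_{q^2}$. Put \[\mathcal U_g:=\{(x,g_x(t)) : x\in\mathbb F_{q^2},\ t\in\mathbb F_q\}\cup\{(\infty)\}.\] If for every $a,b\in\mathbb F_{q^2}$ the number of pairs $(x,t)\in\mathbb F_{q^2}\times\mathbb F_q$ with $f(x+a)-b-g_x(t)=0$ is either $1$ or $q+1$, then $\mathcal U_g$ is a unital in $\Pi(f)$.
   Context: A function $f:\mathbb F_{q^2}\to\mathbb F_{q^2}$ is planar if for every $a\neq 0$ the map $x\mapsto f(x+a)-f(x)$ is a bijection of $\mathbb F_{q^2}$. For planar $f$, the projective plane $\Pi(f)$ has as points the affine points $(x,y)\in\mathbb F_{q^2}\times\mathbb F_{q^2}$ and the points $(a)$ for $a\in\mathbb F_{q^2}\cup\{\infty\}$; its lines are $L_{a,b}=\{(x,f(x+a)-b):x\in\mathbb F_{q^2}\}\cup\{(a)\}$ for $a,b\in\mathbb F_{q^2}$, $N_a=\{(a,y):y\in\mathbb F_{q^2}\}\cup\{(\infty)\}$ for $a\in\mathbb F_{q^2}$, and $L_\infty=\{(a):a\in\mathbb F_{q^2}\cup\{\infty\}\}$; incidence is membership. A unital in $\Pi(f)$ is a set of $q^3+1$ points such that every line of $\Pi(f)$ meets it in exactly $1$ or exactly $q+1$ points. *)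

theory Defs
  imports "HOL-Computational_Algebra.Primes"
begin

text \<open>Points and lines of the projective plane Pi(f) over the field 'a = F_{q^2}.
  Pt_aff x y is the affine point (x,y); Pt_inf (Some a) is the point (a);
  Pt_inf None is the point (infinity).\<close>

datatype 'a pp_point = Pt_aff 'a 'a | Pt_inf "'a option"

datatype 'a pp_line = Ln_L 'a 'a | Ln_N 'a | Ln_inf

definition planar :: "('a::field \<Rightarrow> 'a) \<Rightarrow> bool" where
  "planar f \<longleftrightarrow> (\<forall>a. a \<noteq> 0 \<longrightarrow> bij (\<lambda>x. f (x + a) - f x))"

fun line_pts :: "('a::field \<Rightarrow> 'a) \<Rightarrow> 'a pp_line \<Rightarrow> 'a pp_point set" where
  "line_pts f (Ln_L a b) = {Pt_aff x (f (x + a) - b) | x. True} \<union> {Pt_inf (Some a)}"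
| "line_pts f (Ln_N a) = {Pt_aff a y | y. True} \<union> {Pt_inf None}"
| "line_pts f Ln_inf = {Pt_inf z | z. True}"

definition is_unital :: "nat \<Rightarrow> ('a::field \<Rightarrow> 'a) \<Rightarrow> 'a pp_point set \<Rightarrow> bool" where
  "is_unital q f U \<longleftrightarrow> finite U \<and> card U = q ^ 3 + 1 \<and>
     (\<forall>l. card (U \<inter> line_pts f l) = 1 \<or> card (U \<inter> line_pts f l) = q + 1)"

definition subfield_q :: "nat \<Rightarrow> 'a::field set" where
  "subfield_q q = {x. x ^ q = x}"

definition U_g :: "nat \<Rightarrow> ('a::field \<Rightarrow> 'a \<Rightarrow> 'a) \<Rightarrow> 'a pp_point set" where
  "U_g q g = {Pt_aff x (g x t) | x t. t \<in> subfield_q q} \<union> {Pt_inf None}"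

end

theory Submission
  imports Defs "HOL-Computational_Algebra.Polynomial"
begin

text \<open>
  The affine points of \<open>U_g\<close> are parametrised injectively by the pairs \<open>(x, t)\<close> with
  \<open>x \<in> F_{q^2}\<close> and \<open>t \<in> F_q\<close>, so each intersection with a line is counted directly:
  \<open>L_{a,b}\<close> meets \<open>U_g\<close> exactly in the points given by the solutions of
  \<open>f (x + a) - b = g_x t\<close>, \<open>N_a\<close> in the \<open>q\<close> points \<open>(a, g_a t)\<close> and \<open>(\<infinity>)\<close>, and
  \<open>L_\<infinity>\<close> only in \<open>(\<infinity>)\<close>. What remains is \<open>|F_q| = q\<close> for the solution set of
  \<open>x^q = x\<close>: the map \<open>x \<mapsto> x^(q-1)\<close> sends the \<open>q^2 - 1\<close> nonzero elements into the at most
  \<open>q + 1\<close> roots of \<open>y^(q+1) = 1\<close>, and each fibre is no larger than its kernel, so the kernel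
  has exactly \<open>q - 1\<close> elements.
\<close>

lemma card_power_eq_le:
  fixes c :: "'a::field"
  assumes "n \<ge> 1"
  shows "card {x. x ^ n = c} \<le> n"
proof -
  define p where "p = monom (1::'a) n - [:c:]"
  have "coeff p n = 1" using assms by (cases n) (auto simp: p_def coeff_monom)
  hence "p \<noteq> 0" by auto
  have "degree p \<le> n" unfolding p_def
    by (intro degree_diff_le) (auto simp: degree_monom_le)
  moreover have "{x. x ^ n = c} = {x. poly p x = 0}" by (auto simp: p_def poly_monom)
  ultimately show ?thesis using card_poly_roots_bound[OF \<open>p \<noteq> 0\<close>] by simp
qed

lemma power_card_UNIV_minus_one:
  fixes x :: "'a::{field,finite}"
  assumes "x \<noteq> 0"
  shows "x ^ (card (UNIV::'a set) - 1) = 1"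
proof -
  let ?N = "UNIV - {0::'a}"
  have "(\<Prod>y\<in>?N. x * y) = \<Prod>?N"
    by (rule prod.reindex_bij_witness[of _ "\<lambda>y. y / x" "\<lambda>y. x * y"]) (use assms in auto)
  moreover have "(\<Prod>y\<in>?N. x * y) = x ^ card ?N * \<Prod>?N" by (simp add: prod.distrib)
  ultimately have "x ^ card ?N = 1" by (simp add: prod_zero_iff)
  thus ?thesis by (simp add: card_Diff_singleton)
qed

lemma card_power_fibre_le:
  fixes y :: "'a::{field,finite}"
  shows "card {x. x \<noteq> 0 \<and> x ^ n = y} \<le> card {x::'a. x ^ n = 1}"
proof (cases "\<exists>x0. x0 \<noteq> 0 \<and> x0 ^ n = y")
  case True
  then obtain x0 :: 'a where x0: "x0 \<noteq> 0" "x0 ^ n = y" by blast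
  have "inj_on (\<lambda>x. x / x0) {x. x \<noteq> 0 \<and> x ^ n = y}" using x0 by (auto simp: inj_on_def)
  moreover have "(\<lambda>x. x / x0) ` {x. x \<noteq> 0 \<and> x ^ n = y} \<subseteq> {x. x ^ n = 1}"
    using x0 by (auto simp: power_divide)
  ultimately show ?thesis by (intro card_inj_on_le) auto
next
  case False
  hence empty: "{x. x \<noteq> 0 \<and> x ^ n = y} = {}" by blast
  show ?thesis by (subst empty) simp
qed

lemma card_subfield_q:
  assumes "card (UNIV :: 'a::{field,finite} set) = q ^ 2" and "q \<ge> 2"
  shows "card (subfield_q q :: 'a set) = q"
proof -
  define K where "K = {x::'a. x ^ (q - 1) = 1}"
  define H where "H = {x::'a. x ^ (q + 1) = 1}"
  have "x ^ q = x \<longleftrightarrow> x = 0 \<or> x ^ (q - 1) = 1" for x :: 'a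
    using power_Suc[of x "q - 1"] \<open>q \<ge> 2\<close> by (auto simp: Suc_diff_le)
  hence subfield_eq: "subfield_q q = insert 0 K" by (auto simp: subfield_q_def K_def)
  have "0 \<notin> K" using \<open>q \<ge> 2\<close> by (auto simp: K_def power_0_left)
  have card_K_le: "card K \<le> q - 1" unfolding K_def by (rule card_power_eq_le) (use assms in auto)
  have card_H_le: "card H \<le> q + 1" unfolding H_def by (rule card_power_eq_le) auto
  have "(x ^ (q - 1)) ^ (q + 1) = 1" if "x \<noteq> 0" for x :: 'a
  proof -
    have "(q - 1) * (q + 1) = q ^ 2 - 1"
      by (cases q) (auto simp: power2_eq_square algebra_simps)
    hence "(x ^ (q - 1)) ^ (q + 1) = x ^ (card (UNIV :: 'a set) - 1)"
      by (simp only: assms(1) flip: power_mult)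
    thus ?thesis using power_card_UNIV_minus_one[OF that] by simp
  qed
  hence cover: "UNIV - {0::'a} \<subseteq> (\<Union>y\<in>H. {x. x \<noteq> 0 \<and> x ^ (q - 1) = y})"
    by (auto simp: H_def)
  have "(q + 1) * (q - 1) = card (UNIV - {0::'a})"
    using assms(1) by (cases q) (auto simp: card_Diff_singleton power2_eq_square algebra_simps)
  also have "\<dots> \<le> card (\<Union>y\<in>H. {x::'a. x \<noteq> 0 \<and> x ^ (q - 1) = y})"
    by (rule card_mono[OF _ cover]) auto
  also have "\<dots> \<le> (\<Sum>y\<in>H. card {x::'a. x \<noteq> 0 \<and> x ^ (q - 1) = y})" by (rule card_UN_le) auto
  also have "\<dots> \<le> (\<Sum>y\<in>H. card K)"
    unfolding K_def by (intro sum_mono card_power_fibre_le)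
  also have "\<dots> = card H * card K" by simp
  also have "\<dots> \<le> (q + 1) * card K" using card_H_le by (rule mult_right_mono) simp
  finally have "q - 1 \<le> card K" by (simp only: mult_le_cancel1)
  hence "card K = q - 1" using card_K_le by simp
  thus ?thesis using subfield_eq \<open>0 \<notin> K\<close> \<open>q \<ge> 2\<close> by simp
qed

lemma U_g_eq_image:
  "U_g q g = (\<lambda>(x, t). Pt_aff x (g x t)) ` (UNIV \<times> subfield_q q) \<union> {Pt_inf None}"
  by (auto simp: U_g_def)

lemma inj_on_U_g_param:
  assumes "\<forall>a. inj_on (g a) (subfield_q q)"
  shows "inj_on (\<lambda>(x, t). Pt_aff x (g x t)) (A \<times> subfield_q q)"
  using assms by (auto simp: inj_on_def)

lemma card_U_g:
  assumes "\<forall>a. inj_on (g a) (subfield_q q)"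
  shows "card (U_g q g :: 'a::{field,finite} pp_point set)
           = card (UNIV :: 'a set) * card (subfield_q q :: 'a set) + 1"
  unfolding U_g_eq_image
  using card_image[OF inj_on_U_g_param[OF assms, where A = UNIV]]
  by (simp add: card_cartesian_product card_insert_if image_iff)

lemma card_U_g_inter_Ln_L:
  assumes "\<forall>a. inj_on (g a) (subfield_q q)"
  shows "card (U_g q g \<inter> line_pts f (Ln_L a b))
           = card {(x, t). t \<in> subfield_q q \<and> f (x + a) - b - g x t = 0}"
proof -
  let ?P = "{(x, t). t \<in> subfield_q q \<and> f (x + a) - b - g x t = 0}"
  have "U_g q g \<inter> line_pts f (Ln_L a b) = (\<lambda>(x, t). Pt_aff x (g x t)) ` ?P"
    by (auto simp: U_g_def)
  moreover have "inj_on (\<lambda>(x, t). Pt_aff x (g x t)) ?P"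
    by (rule inj_on_subset[OF inj_on_U_g_param[OF assms, where A = UNIV]]) auto
  ultimately show ?thesis by (simp add: card_image)
qed

lemma card_U_g_inter_Ln_N:
  fixes g :: "'a::{field,finite} \<Rightarrow> 'a \<Rightarrow> 'a"
  assumes "inj_on (g a) (subfield_q q)"
  shows "card (U_g q g \<inter> line_pts f (Ln_N a)) = card (subfield_q q :: 'a set) + 1"
proof -
  have "U_g q g \<inter> line_pts f (Ln_N a) = insert (Pt_inf None) ((\<lambda>t. Pt_aff a (g a t)) ` subfield_q q)"
    by (auto simp: U_g_def)
  moreover have "inj_on (\<lambda>t. Pt_aff a (g a t)) (subfield_q q)"
    using assms by (auto simp: inj_on_def)
  hence "card ((\<lambda>t. Pt_aff a (g a t)) ` subfield_q q) = card (subfield_q q :: 'a set)"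
    by (rule card_image)
  moreover have "Pt_inf None \<notin> (\<lambda>t. Pt_aff a (g a t)) ` subfield_q q" by auto
  ultimately show ?thesis by (simp add: card_insert_if)
qed

lemma U_g_inter_Ln_inf: "U_g q g \<inter> line_pts f Ln_inf = {Pt_inf None}"
  by (auto simp: U_g_def)

theorem lemma2p1:
  fixes q :: nat and p k :: nat
    and f :: "'a::{field,finite} \<Rightarrow> 'a"
    and g :: "'a \<Rightarrow> 'a \<Rightarrow> 'a"
  assumes "prime p" and "odd p" and "k \<ge> 1" and "q = p ^ k"
    and "card (UNIV :: 'a set) = q ^ 2"
    and "planar f"
    and "\<forall>a. inj_on (g a) (subfield_q q)"
    and "\<forall>a b. card {(x, t). t \<in> subfield_q q \<and> f (x + a) - b - g x t = 0} = 1
             \<or> card {(x, t). t \<in> subfield_q q \<and> f (x + a) - b - g x t = 0} = q + 1"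
  shows "is_unital q f (U_g q g)"
proof -
  have "p \<le> q" using assms(3,4) prime_gt_0_nat[OF assms(1)] by (simp add: self_le_power)
  hence "q \<ge> 2" using prime_ge_2_nat[OF assms(1)] by simp
  hence card_subfield: "card (subfield_q q :: 'a set) = q"
    using card_subfield_q[OF assms(5)] by blast
  have card_U: "card (U_g q g) = q ^ 3 + 1"
    using card_U_g[OF assms(7)] card_subfield assms(5) by (simp add: power_numeral_reduce)
  moreover from card_U have "finite (U_g q g)" by (intro card_ge_0_finite) simp
  moreover have "card (U_g q g \<inter> line_pts f l) = 1 \<or> card (U_g q g \<inter> line_pts f l) = q + 1"
    for l
  proof (cases l)
    case (Ln_L a b)
    thus ?thesis using card_U_g_inter_Ln_L[OF assms(7), where f = f and a = a and b = b] assms(8)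
      by auto
  next
    case (Ln_N a)
    thus ?thesis using card_U_g_inter_Ln_N[where g = g and a = a and f = f] assms(7) card_subfield
      by simp
  next
    case Ln_inf
    thus ?thesis using U_g_inter_Ln_inf[of q g f] by simp
  qed
  ultimately show ?thesis unfolding is_unital_def by simp
qed

end
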